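(* Consider the qubit generator families $$\mathcal L^{(1)}_t[\rho]=\gamma_1(t)\,(\sigma_x\rho\sigma_x-\rho),\qquad \mathcal L^{(2)}_t[\rho]=\gamma_2(t)\Big(\sigma_-\rho\sigma_+-\tfrac12\{\sigma_+\sigma_-,\rho\}\Big),$$ with $\sigma_\pm=(\sigma_x\pm\mathrm i\sigma_y)/2$. (a) If $\gamma_1(t)=\sin(2t)$ and $\gamma_2(t)=1$, then each of $\mathcal L^{(1)}$, $\mathcal L^{(2)}$ individually generates SSC dynamics consisting of CPTP maps for all $t\ge0$, but the family $\Lambda_t$ solving $\dot\Lambda_t=(\mathcal L^{(1)}_t+\mathcal L^{(2)}_t)\circ\Lambda_t$, $\Lambda_0=\mathrm{id}$, contains a map that is not completely positive (in particular $\Lambda_\pi$ is not completely positive). (b) If $\gamma_1(t)=1/2$ and $\gamma_2(t)=\sin t$, then again each of $\mathcal L^{(1)}$, $\mathcal L^{(2)}$ individually generates SSC dynamics consisting of CPTP maps for all $t\ge0$, but the map $\Lambda_{2\pi}$ generated by $\mathcal L^{(1)}_t+\mathcal L^{(2)}_t$ is not completely positive.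
   Context: $\sigma_x,\sigma_y,\sigma_z$ are the Pauli matrices. A family of generators $\mathcal L_t$ generates the maps $\Lambda_t$ solving $\dot\Lambda_t=\mathcal L_t\circ\Lambda_t$ with $\Lambda_0$ the identity. For a commutative family ($[\mathcal L_s,\mathcal L_t]=0$) one has $\Lambda_t=\exp(\mathcal Z_t)$ with $\mathcal Z_t=\int_0^t\mathcal L_\tau d\tau$; the dynamics is SSC (semigroup-simulable and commutative) if, in addition, each $\mathcal Z_t$ is of GKSL form, i.e. $\mathcal Z_t[\rho]=-\mathrm i[H,\rho]+\sum_{i,j}\mathsf D_{ij}(F_i\rho F_j^\dagger-\frac12\{F_j^\dagger F_i,\rho\})$ with $\mathsf D\ge0$ in an orthonormal traceless operator basis $\{F_i\}$. *)

theory Defs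
  imports "HOL-Analysis.Analysis"
begin

type_synonym qmat = "complex^2^2"

definition smat :: "complex \<Rightarrow> qmat \<Rightarrow> qmat" where
  "smat c A = (\<chi> i j. c * A$i$j)"

definition adj :: "qmat \<Rightarrow> qmat" where
  "adj A = (\<chi> i j. cnj (A$j$i))"

definition sigma_x :: qmat where
  "sigma_x = (\<chi> i j. if i = j then 0 else 1)"
definition sigma_y :: qmat where
  "sigma_y = (\<chi> i j. if i = j then 0 else if i = 1 then - \<i> else \<i>)"
definition sigma_z :: qmat where
  "sigma_z = (\<chi> i j. if i \<noteq> j then 0 else if i = 1 then 1 else -1)"

definition sigma_plus :: qmat where
  "sigma_plus = smat (1/2) (sigma_x + smat \<i> sigma_y)"
definition sigma_minus :: qmat where
  "sigma_minus = smat (1/2) (sigma_x - smat \<i> sigma_y)"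

definition gen1 :: "(real \<Rightarrow> real) \<Rightarrow> real \<Rightarrow> qmat \<Rightarrow> qmat" where
  "gen1 \<gamma> t \<rho> = smat (complex_of_real (\<gamma> t)) (sigma_x ** \<rho> ** sigma_x - \<rho>)"

definition gen2 :: "(real \<Rightarrow> real) \<Rightarrow> real \<Rightarrow> qmat \<Rightarrow> qmat" where
  "gen2 \<gamma> t \<rho> = smat (complex_of_real (\<gamma> t))
      (sigma_minus ** \<rho> ** sigma_plus
       - smat (1/2) (sigma_plus ** sigma_minus ** \<rho> + \<rho> ** sigma_plus ** sigma_minus))"

definition solves :: "(real \<Rightarrow> qmat \<Rightarrow> qmat) \<Rightarrow> (real \<Rightarrow> qmat \<Rightarrow> qmat) \<Rightarrow> bool" where
  "solves L \<Lambda> \<longleftrightarrow> \<Lambda> 0 = id \<and>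
     (\<forall>t\<ge>0. \<forall>\<rho>. ((\<lambda>s. \<Lambda> s \<rho>) has_vector_derivative L t (\<Lambda> t \<rho>)) (at t within {0..}))"

definition hform :: "complex^'n \<Rightarrow> complex^'n \<Rightarrow> complex" where
  "hform u w = (\<Sum>a\<in>UNIV. cnj (u$a) * w$a)"

definition nonneg_real :: "complex \<Rightarrow> bool" where
  "nonneg_real z \<longleftrightarrow> Im z = 0 \<and> 0 \<le> Re z"

definition psd :: "complex^'n^'n \<Rightarrow> bool" where
  "psd A \<longleftrightarrow> (\<forall>v. nonneg_real (hform v (A *v v)))"

(* An element of M_2 \<otimes> M_k, written as a k\<times>k block matrix of 2\<times>2 blocks X i j (i,j<k),
   is positive semidefinite *)
definition psd_block :: "nat \<Rightarrow> (nat \<Rightarrow> nat \<Rightarrow> qmat) \<Rightarrow> bool" where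
  "psd_block k X \<longleftrightarrow>
     (\<forall>v :: nat \<Rightarrow> complex^2. nonneg_real (\<Sum>i<k. \<Sum>j<k. hform (v i) (X i j *v v j)))"

(* complete positivity: \<Phi> \<otimes> id_k is positive for every k *)
definition completely_positive :: "(qmat \<Rightarrow> qmat) \<Rightarrow> bool" where
  "completely_positive \<Phi> \<longleftrightarrow>
     (\<forall>k X. psd_block k X \<longrightarrow> psd_block k (\<lambda>i j. \<Phi> (X i j)))"

definition trace_preserving :: "(qmat \<Rightarrow> qmat) \<Rightarrow> bool" where
  "trace_preserving \<Phi> \<longleftrightarrow> (\<forall>\<rho>. trace (\<Phi> \<rho>) = trace \<rho>)"

definition CPTP :: "(qmat \<Rightarrow> qmat) \<Rightarrow> bool" where
  "CPTP \<Phi> \<longleftrightarrow> linear \<Phi> \<and> completely_positive \<Phi> \<and> trace_preserving \<Phi>"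

definition Zint :: "(real \<Rightarrow> qmat \<Rightarrow> qmat) \<Rightarrow> real \<Rightarrow> qmat \<Rightarrow> qmat" where
  "Zint L t \<rho> = integral {0..t} (\<lambda>\<tau>. L \<tau> \<rho>)"

(* orthonormal (Hilbert-Schmidt) basis of traceless operators on C^2 (d^2-1 = 3 elements) *)
definition orthonormal_traceless_basis :: "(3 \<Rightarrow> qmat) \<Rightarrow> bool" where
  "orthonormal_traceless_basis F \<longleftrightarrow>
     (\<forall>i. trace (F i) = 0) \<and> (\<forall>i j. trace (adj (F i) ** F j) = (if i = j then 1 else 0))"

definition GKSL_form :: "(qmat \<Rightarrow> qmat) \<Rightarrow> bool" where
  "GKSL_form Z \<longleftrightarrow> (\<exists>H F (D :: complex^3^3).
     adj H = H \<and> orthonormal_traceless_basis F \<and> psd D \<and>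
     (\<forall>\<rho>. Z \<rho> = smat (- \<i>) (H ** \<rho> - \<rho> ** H)
        + (\<Sum>i\<in>UNIV. \<Sum>j\<in>UNIV. smat (D$i$j)
            (F i ** \<rho> ** adj (F j)
             - smat (1/2) (adj (F j) ** F i ** \<rho> + \<rho> ** adj (F j) ** F i)))))"

definition commutative_family :: "(real \<Rightarrow> qmat \<Rightarrow> qmat) \<Rightarrow> bool" where
  "commutative_family L \<longleftrightarrow> (\<forall>s\<ge>0. \<forall>t\<ge>0. L s \<circ> L t = L t \<circ> L s)"

(* semigroup-simulable and commutative *)
definition SSC :: "(real \<Rightarrow> qmat \<Rightarrow> qmat) \<Rightarrow> bool" where
  "SSC L \<longleftrightarrow> commutative_family L \<and> (\<forall>t\<ge>0. GKSL_form (Zint L t))"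

definition generates_SSC_CPTP :: "(real \<Rightarrow> qmat \<Rightarrow> qmat) \<Rightarrow> bool" where
  "generates_SSC_CPTP L \<longleftrightarrow> SSC L \<and> (\<exists>\<Lambda>. solves L \<Lambda>) \<and>
     (\<forall>\<Lambda>. solves L \<Lambda> \<longrightarrow> (\<forall>t\<ge>0. CPTP (\<Lambda> t)))"

end

theory Submission
  imports Defs
begin

text \<open>In the coordinates trace, population difference and the two coherences, both generator
  families and their sums decouple into scalar linear ODEs, so the dynamics is an explicit flow and
  unique. Each family alone integrates to a bit-flip or amplitude-damping channel with nonnegative
  integrated rate, hence is SSC and CPTP. For the sum, the population difference acquires an
  inhomogeneous part \<open>\<phi>\<close> with \<open>\<phi>' = -(2\<gamma>\<^sub>1 + \<gamma>\<^sub>2) \<phi> - \<gamma>\<^sub>2\<close>, \<open>\<phi> 0 = 0\<close>. Comparing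
  \<open>exp E \<cdot> \<phi>\<close> (\<open>E\<close> the integrated decay rate) with \<open>exp t\<close> by the mean value theorem shows:
  in (a) \<open>\<phi> \<pi>\<close> is so negative that \<open>\<Lambda>\<^sub>\<pi>\<close> maps the ground state to a matrix with a negative
  diagonal entry; in (b) all decay factors at \<open>2\<pi>\<close> are those of a bit-flip channel on the
  boundary of complete positivity, and \<open>\<phi> (2\<pi>) > 0\<close> pushes a \<open>2\<times>2\<close> minor of the Choi
  matrix below zero.\<close>

definition mat2 :: "complex \<Rightarrow> complex \<Rightarrow> complex \<Rightarrow> complex \<Rightarrow> qmat" where
  "mat2 a b c d = (\<chi> i j. if i = 1 then (if j = 1 then a else b) else (if j = 1 then c else d))"

lemma mat2_nth [simp]:
  "mat2 a b c d $ 1 $ 1 = a" "mat2 a b c d $ 1 $ 2 = b"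
  "mat2 a b c d $ 2 $ 1 = c" "mat2 a b c d $ 2 $ 2 = d"
  by (simp_all add: mat2_def)

lemma qmat_eq_iff:
  "(A::qmat) = B \<longleftrightarrow> A$1$1 = B$1$1 \<and> A$1$2 = B$1$2 \<and> A$2$1 = B$2$1 \<and> A$2$2 = B$2$2"
  by (auto simp: vec_eq_iff forall_2)

lemma matrix_matrix_mult_nth_2: "((A::qmat) ** B) $ i $ j = A$i$1 * B$1$j + A$i$2 * B$2$j"
  by (simp add: matrix_matrix_mult_def sum_2)

lemma matrix_vector_mult_nth_2: "((A::qmat) *v x) $ i = A$i$1 * x$1 + A$i$2 * x$2"
  by (simp add: matrix_vector_mult_def sum_2)

lemma hform_2: "hform (v::complex^2) w = cnj (v$1) * w$1 + cnj (v$2) * w$2"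
  by (simp add: hform_def sum_2)

lemma smat_nth [simp]: "smat c A $ i $ j = c * A$i$j"
  by (simp add: smat_def)

lemma adj_nth [simp]: "adj A $ i $ j = cnj (A$j$i)"
  by (simp add: adj_def)

lemma sigma_x_nth [simp]:
  "sigma_x$1$1 = 0" "sigma_x$1$2 = 1" "sigma_x$2$1 = 1" "sigma_x$2$2 = 0"
  by (simp_all add: sigma_x_def)

lemma sigma_y_nth [simp]:
  "sigma_y$1$1 = 0" "sigma_y$1$2 = -\<i>" "sigma_y$2$1 = \<i>" "sigma_y$2$2 = 0"
  by (simp_all add: sigma_y_def)

lemma sigma_plus_nth [simp]:
  "sigma_plus$1$1 = 0" "sigma_plus$1$2 = 1" "sigma_plus$2$1 = 0" "sigma_plus$2$2 = 0"
  by (simp_all add: sigma_plus_def)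

lemma sigma_minus_nth [simp]:
  "sigma_minus$1$1 = 0" "sigma_minus$1$2 = 0" "sigma_minus$2$1 = 1" "sigma_minus$2$2 = 0"
  by (simp_all add: sigma_minus_def)

lemma gen1_nth [simp]:
  "gen1 g t r $1$1 = of_real (g t) * (r$2$2 - r$1$1)"
  "gen1 g t r $1$2 = of_real (g t) * (r$2$1 - r$1$2)"
  "gen1 g t r $2$1 = of_real (g t) * (r$1$2 - r$2$1)"
  "gen1 g t r $2$2 = of_real (g t) * (r$1$1 - r$2$2)"
  by (simp_all add: gen1_def matrix_matrix_mult_nth_2)

lemma gen2_nth [simp]:
  "gen2 g t r $1$1 = - of_real (g t) * r$1$1"
  "gen2 g t r $1$2 = - of_real (g t) / 2 * r$1$2"
  "gen2 g t r $2$1 = - of_real (g t) / 2 * r$2$1"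
  "gen2 g t r $2$2 = of_real (g t) * r$1$1"
  by (simp_all add: gen2_def matrix_matrix_mult_nth_2 field_simps)

lemma has_vector_derivative_mat2:
  assumes "(a has_vector_derivative a') F" "(b has_vector_derivative b') F"
    and "(c has_vector_derivative c') F" "(d has_vector_derivative d') F"
  shows "((\<lambda>s. mat2 (a s) (b s) (c s) (d s)) has_vector_derivative mat2 a' b' c' d') F"
proof -
  let ?unit = "\<lambda>p q z. (\<chi> i j. if i = p \<and> j = q then z else 0) :: qmat"
  have "linear (?unit p q)" for p q
    by (rule linearI) (auto simp: vec_eq_iff)
  then have unit: "bounded_linear (?unit p q)" for p q
    by (simp add: linear_conv_bounded_linear)
  have "mat2 a b c d = ?unit 1 1 a + ?unit 1 2 b + ?unit 2 1 c + ?unit 2 2 d" for a b c d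
    by (simp add: qmat_eq_iff)
  then show ?thesis
    by (simp only:) (intro has_vector_derivative_add bounded_linear.has_vector_derivative[OF unit] assms)
qed

lemma has_vector_derivative_qmat_nth:
  fixes f :: "real \<Rightarrow> qmat"
  assumes "(f has_vector_derivative f') F"
  shows "((\<lambda>s. f s $ i $ j) has_vector_derivative f' $ i $ j) F"
  using bounded_linear.has_vector_derivative
    [OF bounded_linear_compose[OF bounded_linear_vec_nth bounded_linear_vec_nth] assms]
  by simp

lemma homogeneous_linear_ode_zero:
  fixes y :: "real \<Rightarrow> 'a::real_normed_vector"
  assumes dy: "\<And>s. 0 \<le> s \<Longrightarrow> (y has_vector_derivative k s *\<^sub>R y s) (at s within {0..})"
    and dK: "\<And>s. 0 \<le> s \<Longrightarrow> (K has_real_derivative k s) (at s within {0..})"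
    and y0: "y 0 = 0" and t: "0 \<le> t"
  shows "y t = 0"
proof -
  have "((\<lambda>s. exp (- K s) *\<^sub>R y s) has_vector_derivative 0) (at s within {0..})"
    if "s \<in> {0..}" for s
  proof -
    have s: "0 \<le> s"
      using that by simp
    show ?thesis
      by (rule has_vector_derivative_eq_rhs[OF has_vector_derivative_scaleR
            [OF DERIV_chain2[where f=exp, OF DERIV_exp DERIV_minus[OF dK[OF s]]] dy[OF s]]])
         (simp add: algebra_simps)
  qed
  then obtain c where "\<And>s. s \<in> {0..} \<Longrightarrow> exp (- K s) *\<^sub>R y s = c"
    using has_vector_derivative_zero_constant[OF convex_real_interval(1)] by blast
  from this[of t] this[of 0] t show ?thesis
    by (simp add: y0)
qed

lemma first_order_linear_ode_solution:
  assumes dE: "\<And>t. (E has_real_derivative k t) (at t)" and h: "continuous_on UNIV h"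
  obtains \<phi> where "\<phi> 0 = 0"
    and "\<And>t. 0 \<le> t \<Longrightarrow> (\<phi> has_real_derivative - k t * \<phi> t - h t) (at t within {0..})"
proof -
  have cont: "continuous_on UNIV (\<lambda>t. h t * exp (E t))"
    using dE by (intro continuous_intros h continuous_at_imp_continuous_on) (auto intro: DERIV_isCont)
  define \<phi> where "\<phi> = (\<lambda>t. - exp (- E t) * integral {0..t} (\<lambda>t. h t * exp (E t)))"
  have d\<phi>: "(\<phi> has_real_derivative - k t * \<phi> t - h t) (at t within {0..})" if t: "0 \<le> t" for t
  proof -
    let ?I = "\<lambda>u. integral {0..u} (\<lambda>t. h t * exp (E t))"
    have "(?I has_real_derivative h t * exp (E t)) (at t within {0..t+1})"
      by (rule integral_has_real_derivative) (use t cont in \<open>auto intro: continuous_on_subset\<close>)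
    moreover have "at t within {0..t+1} = at t within {0..}"
      by (rule at_within_nhd[where S="{..<t+1}"]) auto
    ultimately have dI: "(?I has_real_derivative h t * exp (E t)) (at t within {0..})"
      by simp
    show ?thesis
      unfolding \<phi>_def
      by (auto intro!: derivative_eq_intros has_field_derivative_at_within[OF dE] dI
          simp: exp_minus field_simps)
  qed
  have \<phi>0: "\<phi> 0 = 0"
    by (simp add: \<phi>_def)
  show thesis
    by (rule that[OF \<phi>0 d\<phi>])
qed

lemma integrating_factor_derivative:
  assumes dE: "(E has_real_derivative k t) (at t)"
    and d\<phi>: "(\<phi> has_real_derivative - k t * \<phi> t - h t) (at t within S)"
  shows "((\<lambda>s. exp (E s) * \<phi> s) has_real_derivative - h t * exp (E t)) (at t within S)"
  by (auto intro!: derivative_eq_intros has_field_derivative_at_within[OF dE] d\<phi>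
      simp: algebra_simps)

lemma strict_decrease_of_negative_derivative:
  fixes D :: "real \<Rightarrow> real"
  assumes T: "0 < T"
    and dD: "\<And>x. 0 \<le> x \<Longrightarrow> (D has_real_derivative D' x) (at x within {0..})"
    and neg: "\<And>x. 0 < x \<Longrightarrow> x < T \<Longrightarrow> D' x < 0"
  shows "D T < D 0"
proof -
  have "(D has_derivative (*) (D' x)) (at x within {0..T})" if "0 \<le> x" "x \<le> T" for x
    using DERIV_subset[OF dD[OF that(1)], of "{0..T}"] by (auto simp: has_field_derivative_def)
  then obtain \<xi> where "\<xi> \<in> {0<..<T}" and "D T - D 0 = D' \<xi> * (T - 0)"
    using mvt_simple[OF T, of D "\<lambda>x. (*) (D' x)"] by auto
  moreover have "D' \<xi> * T < 0"
    using neg[of \<xi>] T \<open>\<xi> \<in> {0<..<T}\<close> by (simp add: mult_neg_pos)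
  ultimately show ?thesis
    by simp
qed

definition gen12 :: "(real \<Rightarrow> real) \<Rightarrow> (real \<Rightarrow> real) \<Rightarrow> real \<Rightarrow> qmat \<Rightarrow> qmat" where
  "gen12 g1 g2 t r = gen1 g1 t r + gen2 g2 t r"

lemma gen12_diff: "gen12 g1 g2 t (x - y) = gen12 g1 g2 t x - gen12 g1 g2 t y"
  by (simp add: gen12_def qmat_eq_iff algebra_simps)

lemma gen1_eq_gen12: "gen1 g = gen12 g (\<lambda>_. 0)"
  by (simp add: fun_eq_iff gen12_def qmat_eq_iff)

lemma gen2_eq_gen12: "gen2 g = gen12 (\<lambda>_. 0) g"
  by (simp add: fun_eq_iff gen12_def qmat_eq_iff)

text \<open>In the coordinates \<open>s = r\<^sub>1\<^sub>1 + r\<^sub>2\<^sub>2\<close>, \<open>z = r\<^sub>1\<^sub>1 - r\<^sub>2\<^sub>2\<close>,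
  \<open>u = r\<^sub>1\<^sub>2 + r\<^sub>2\<^sub>1\<close>, \<open>w = r\<^sub>1\<^sub>2 - r\<^sub>2\<^sub>1\<close> the generator \<open>gen12 g1 g2\<close> decouples into
  \<open>s' = 0\<close>, \<open>z' = -(2 g1 + g2) z - g2 s\<close>, \<open>u' = -(g2/2) u\<close>, \<open>w' = -(2 g1 + g2/2) w\<close>.
  With primitives \<open>G1\<close>, \<open>G2\<close> of the rates and \<open>\<phi>\<close> the solution of the inhomogeneous part
  with \<open>\<phi> 0 = 0\<close>, this is the flow below.\<close>

definition flow :: "(real \<Rightarrow> real) \<Rightarrow> (real \<Rightarrow> real) \<Rightarrow> (real \<Rightarrow> real) \<Rightarrow> real \<Rightarrow> qmat \<Rightarrow> qmat" where
  "flow G1 G2 \<phi> t r =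
    (let s = r$1$1 + r$2$2;
         z = of_real (exp (- 2 * G1 t - G2 t)) * (r$1$1 - r$2$2) + of_real (\<phi> t) * s;
         u = of_real (exp (- G2 t / 2)) * (r$1$2 + r$2$1);
         w = of_real (exp (- 2 * G1 t - G2 t / 2)) * (r$1$2 - r$2$1)
     in mat2 ((s + z) / 2) ((u + w) / 2) ((u - w) / 2) ((s - z) / 2))"

locale primitive_rates =
  fixes g1 g2 G1 G2 \<phi> :: "real \<Rightarrow> real"
  assumes G1_0: "G1 0 = 0" and G2_0: "G2 0 = 0" and \<phi>_0: "\<phi> 0 = 0"
    and G1_deriv: "\<And>t. 0 \<le> t \<Longrightarrow> (G1 has_real_derivative g1 t) (at t within {0..})"
    and G2_deriv: "\<And>t. 0 \<le> t \<Longrightarrow> (G2 has_real_derivative g2 t) (at t within {0..})"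
    and \<phi>_deriv: "\<And>t. 0 \<le> t \<Longrightarrow>
      (\<phi> has_real_derivative - (2 * g1 t + g2 t) * \<phi> t - g2 t) (at t within {0..})"
begin

lemma flow_0: "flow G1 G2 \<phi> 0 = id"
  by (simp add: fun_eq_iff flow_def G1_0 G2_0 \<phi>_0 qmat_eq_iff field_simps)

lemma flow_has_vector_derivative:
  assumes t: "0 \<le> t"
  shows "((\<lambda>s. flow G1 G2 \<phi> s r) has_vector_derivative gen12 g1 g2 t (flow G1 G2 \<phi> t r))
    (at t within {0..})"
  unfolding flow_def Let_def
  apply (rule has_vector_derivative_eq_rhs)
   apply (rule has_vector_derivative_mat2;
        auto intro!: derivative_eq_intros G1_deriv G2_deriv \<phi>_deriv t)
  apply (simp add: gen12_def qmat_eq_iff field_simps)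
  done

lemma flow_solves: "solves (gen12 g1 g2) (flow G1 G2 \<phi>)"
  by (simp add: solves_def flow_0 flow_has_vector_derivative)

lemma solution_from_zero_vanishes:
  assumes d\<Delta>: "\<And>s. 0 \<le> s \<Longrightarrow> (\<Delta> has_vector_derivative gen12 g1 g2 s (\<Delta> s)) (at s within {0..})"
    and \<Delta>0: "\<Delta> 0 = 0" and t: "0 \<le> t"
  shows "\<Delta> t = 0"
proof -
  define a b c d where "a s = \<Delta> s $ 1 $ 1" and "b s = \<Delta> s $ 1 $ 2"
    and "c s = \<Delta> s $ 2 $ 1" and "d s = \<Delta> s $ 2 $ 2" for s
  have entry: "((\<lambda>s. \<Delta> s $ i $ j) has_vector_derivative gen12 g1 g2 s (\<Delta> s) $ i $ j) (at s within {0..})"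
    if "0 \<le> s" for s i j
    by (rule has_vector_derivative_qmat_nth[OF d\<Delta>[OF that]])
  have diag_sum: "a s + d s = 0" if "0 \<le> s" for s
  proof (rule homogeneous_linear_ode_zero[where k="\<lambda>_. 0" and K="\<lambda>_. 0", OF _ _ _ that])
    show "((\<lambda>s. a s + d s) has_vector_derivative 0 *\<^sub>R (a s + d s)) (at s within {0..})"
      if "0 \<le> s" for s
      using has_vector_derivative_add[OF entry[OF that, of 1 1] entry[OF that, of 2 2]]
      by (simp add: a_def d_def gen12_def algebra_simps)
  qed (simp_all add: a_def d_def \<Delta>0)
  have z: "a s - d s = 0" if "0 \<le> s" for s
  proof (rule homogeneous_linear_ode_zero[where K="\<lambda>s. - 2 * G1 s - G2 s", OF _ _ _ that])
    show "((\<lambda>s. a s - d s) has_vector_derivative (- 2 * g1 s - g2 s) *\<^sub>R (a s - d s))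
      (at s within {0..})"
      if "0 \<le> s" for s
      using has_vector_derivative_diff[OF entry[OF that, of 1 1] entry[OF that, of 2 2]] diag_sum[OF that]
      by (simp add: a_def d_def gen12_def scaleR_conv_of_real eq_neg_iff_add_eq_0[symmetric]
          algebra_simps)
  qed (auto intro!: derivative_eq_intros G1_deriv G2_deriv simp: a_def d_def \<Delta>0)
  have u: "b s + c s = 0" if "0 \<le> s" for s
  proof (rule homogeneous_linear_ode_zero[where K="\<lambda>s. - G2 s / 2", OF _ _ _ that])
    show "((\<lambda>s. b s + c s) has_vector_derivative (- g2 s / 2) *\<^sub>R (b s + c s)) (at s within {0..})"
      if "0 \<le> s" for s
      using has_vector_derivative_add[OF entry[OF that, of 1 2] entry[OF that, of 2 1]]
      by (simp add: b_def c_def gen12_def scaleR_conv_of_real algebra_simps)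
  qed (auto intro!: derivative_eq_intros G2_deriv simp: b_def c_def \<Delta>0)
  have w: "b s - c s = 0" if "0 \<le> s" for s
  proof (rule homogeneous_linear_ode_zero[where K="\<lambda>s. - 2 * G1 s - G2 s / 2", OF _ _ _ that])
    show "((\<lambda>s. b s - c s) has_vector_derivative (- 2 * g1 s - g2 s / 2) *\<^sub>R (b s - c s))
      (at s within {0..})"
      if "0 \<le> s" for s
      using has_vector_derivative_diff[OF entry[OF that, of 1 2] entry[OF that, of 2 1]]
      by (simp add: b_def c_def gen12_def scaleR_conv_of_real algebra_simps)
  qed (auto intro!: derivative_eq_intros G1_deriv G2_deriv simp: b_def c_def \<Delta>0)
  have "a t = 0" "d t = 0" "b t = 0" "c t = 0"
    using diag_sum[OF t] z[OF t] u[OF t] w[OF t] by (auto simp: algebra_simps)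
  then show ?thesis
    by (simp add: a_def b_def c_def d_def qmat_eq_iff)
qed

lemma solves_imp_eq_flow:
  assumes "solves (gen12 g1 g2) \<Lambda>" and t: "0 \<le> t"
  shows "\<Lambda> t = flow G1 G2 \<phi> t"
proof
  fix r
  have "(\<lambda>s. \<Lambda> s r - flow G1 G2 \<phi> s r) t = 0"
  proof (rule solution_from_zero_vanishes[OF _ _ t])
    show "((\<lambda>s. \<Lambda> s r - flow G1 G2 \<phi> s r) has_vector_derivative
        gen12 g1 g2 s (\<Lambda> s r - flow G1 G2 \<phi> s r)) (at s within {0..})" if "0 \<le> s" for s
      using has_vector_derivative_diff[OF _ flow_has_vector_derivative[OF that]] assms(1) that
      by (simp add: solves_def gen12_diff)
  qed (use assms(1) in \<open>simp add: solves_def flow_0\<close>)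
  then show "\<Lambda> t r = flow G1 G2 \<phi> t r"
    by simp
qed

end

lemma nonneg_real_cnj_mult: "nonneg_real (cnj w * w)"
  by (simp add: mult.commute[of "cnj w"] complex_mult_cnj nonneg_real_def)

lemma hform_add: "hform (v::complex^2) ((A + B) *v w) = hform v (A *v w) + hform v (B *v w)"
  by (simp add: hform_2 matrix_vector_mult_add_rdistrib ring_distribs)

lemma hform_conj: "hform v ((K ** X ** adj K) *v w) = hform (adj K *v v) (X *v (adj K *v w))"
  by (simp add: hform_2 matrix_vector_mult_nth_2 matrix_matrix_mult_nth_2 algebra_simps)

lemma completely_positive_conj: "completely_positive (\<lambda>X. K ** X ** adj (K::qmat))"
  unfolding completely_positive_def psd_block_def
proof (intro allI impI)
  fix k and X :: "nat \<Rightarrow> nat \<Rightarrow> qmat" and v :: "nat \<Rightarrow> complex^2"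
  assume "\<forall>v. nonneg_real (\<Sum>i<k. \<Sum>j<k. hform (v i) (X i j *v v j))"
  from this[rule_format, of "\<lambda>i. adj K *v v i"]
  show "nonneg_real (\<Sum>i<k. \<Sum>j<k. hform (v i) ((K ** X i j ** adj K) *v v j))"
    by (simp add: hform_conj)
qed

lemma completely_positive_add:
  assumes "completely_positive \<Phi>" and "completely_positive \<Psi>"
  shows "completely_positive (\<lambda>X. \<Phi> X + \<Psi> X)"
  using assms unfolding completely_positive_def psd_block_def
  by (simp add: hform_add sum.distrib nonneg_real_def)

lemma completely_positive_diagonal_nonneg:
  assumes "completely_positive \<Phi>" and "psd X"
  shows "nonneg_real (\<Phi> X $ i $ i)"
proof -
  have "psd_block 1 (\<lambda>_ _. X)"
    using assms(2) by (simp add: psd_block_def psd_def)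
  then have "psd_block 1 (\<lambda>_ _. \<Phi> X)"
    using assms(1) by (simp add: completely_positive_def)
  from this[unfolded psd_block_def, rule_format, of "\<lambda>_. axis i 1"]
  show ?thesis
    using exhaust_2[of i] by (auto simp: hform_2 matrix_vector_mult_nth_2 axis_def)
qed

lemma completely_positive_choi_minor:
  assumes cp: "completely_positive \<Phi>"
    and pos: "0 < Re (\<Phi> (mat2 1 0 0 0) $ 1 $ 1)"
  shows "((Re (\<Phi> (mat2 0 1 0 0) $ 1 $ 2) + Re (\<Phi> (mat2 0 0 1 0) $ 2 $ 1)) / 2)\<^sup>2
    \<le> Re (\<Phi> (mat2 1 0 0 0) $ 1 $ 1) * Re (\<Phi> (mat2 0 0 0 1) $ 2 $ 2)"
proof -
  define A C D where "A = Re (\<Phi> (mat2 1 0 0 0) $ 1 $ 1)"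
    and "C = (Re (\<Phi> (mat2 0 1 0 0) $ 1 $ 2) + Re (\<Phi> (mat2 0 0 1 0) $ 2 $ 1)) / 2"
    and "D = Re (\<Phi> (mat2 0 0 0 1) $ 2 $ 2)"
  define E :: "nat \<Rightarrow> nat \<Rightarrow> qmat" where
    "E i j = (if i = 0 then (if j = 0 then mat2 1 0 0 0 else mat2 0 1 0 0)
              else (if j = 0 then mat2 0 0 1 0 else mat2 0 0 0 1))" for i j
  have sum_less_2: "(\<Sum>i<2. f i) = f 0 + f (1::nat)" for f :: "nat \<Rightarrow> complex"
    by (simp add: numeral_2_eq_2)
  have "psd_block 2 E"
    unfolding psd_block_def
  proof
    fix v :: "nat \<Rightarrow> complex^2"
    have "(\<Sum>i<2. \<Sum>j<2. hform (v i) (E i j *v v j)) = cnj (v 0 $ 1 + v 1 $ 2) * (v 0 $ 1 + v 1 $ 2)"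
      by (simp add: sum_less_2 E_def hform_2 matrix_vector_mult_nth_2 algebra_simps)
    also have "nonneg_real \<dots>"
      by (rule nonneg_real_cnj_mult)
    finally show "nonneg_real (\<Sum>i<2. \<Sum>j<2. hform (v i) (E i j *v v j))" .
  qed
  then have "psd_block 2 (\<lambda>i j. \<Phi> (E i j))"
    using cp by (simp add: completely_positive_def)
  define w :: "nat \<Rightarrow> complex^2" where
    "w i = (if i = 0 then axis 1 (complex_of_real C) else axis 2 (- complex_of_real A))" for i
  have "0 \<le> Re (\<Sum>i<2. \<Sum>j<2. hform (w i) (\<Phi> (E i j) *v w j))"
    using \<open>psd_block 2 (\<lambda>i j. \<Phi> (E i j))\<close> by (simp add: psd_block_def nonneg_real_def)
  also have "Re (\<Sum>i<2. \<Sum>j<2. hform (w i) (\<Phi> (E i j) *v w j)) = A * (A * D - C\<^sup>2)"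
    by (simp add: w_def sum_less_2 E_def hform_2 matrix_vector_mult_nth_2 axis_def
        A_def C_def D_def power2_eq_square field_simps)
  finally have "0 \<le> A * (A * D - C\<^sup>2)" .
  then show ?thesis
    using pos by (simp add: A_def C_def D_def zero_le_mult_iff)
qed

lemma flow_linear: "linear (flow G1 G2 \<phi> t)"
  by (rule linearI; simp add: flow_def Let_def qmat_eq_iff;
      simp add: scaleR_conv_of_real field_simps; simp add: algebra_simps)

lemma flow_trace_preserving: "trace_preserving (flow G1 G2 \<phi> t)"
  by (simp add: trace_preserving_def trace_def sum_2 flow_def Let_def field_simps)

text \<open>Kraus decompositions: a bit flip with probability \<open>(1 - exp (-2 G))/2\<close>, and amplitude
  damping with decay probability \<open>1 - exp (-G)\<close>.\<close>

lemma completely_positive_flow_bit_flip: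
  assumes "0 \<le> G t"
  shows "completely_positive (flow G (\<lambda>_. 0) (\<lambda>_. 0) t)"
proof -
  define e where "e = exp (- (2 * G t))"
  have e: "0 < e" "e \<le> 1"
    using assms by (auto simp: e_def)
  define p q where "p = complex_of_real (sqrt ((1 + e) / 2))"
    and "q = complex_of_real (sqrt ((1 - e) / 2))"
  have pq: "p * p = of_real ((1 + e) / 2)" "q * q = of_real ((1 - e) / 2)" "cnj p = p" "cnj q = q"
    using e by (simp_all add: p_def q_def flip: of_real_mult)
  have ppqq: "p * (p * x) = of_real ((1 + e) / 2) * x" "q * (q * x) = of_real ((1 - e) / 2) * x"
    for x
    by (simp_all add: mult.assoc[symmetric] pq)
  have "flow G (\<lambda>_. 0) (\<lambda>_. 0) t =
      (\<lambda>X. mat2 p 0 0 p ** X ** adj (mat2 p 0 0 p) + mat2 0 q q 0 ** X ** adj (mat2 0 q q 0))"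
    by (simp add: fun_eq_iff qmat_eq_iff flow_def Let_def matrix_matrix_mult_nth_2 pq flip: e_def)
       (simp add: ppqq field_simps)
  then show ?thesis
    by (simp add: completely_positive_add completely_positive_conj)
qed

lemma completely_positive_flow_amplitude_damping:
  assumes "0 \<le> G t"
  shows "completely_positive (flow (\<lambda>_. 0) G (\<lambda>t. exp (- G t) - 1) t)"
proof -
  define e where "e = exp (- G t)"
  have e: "0 < e" "e \<le> 1"
    using assms by (auto simp: e_def)
  define p q where "p = complex_of_real (exp (- (G t / 2)))"
    and "q = complex_of_real (sqrt (1 - e))"
  have pq: "p * p = of_real e" "q * q = of_real (1 - e)" "cnj p = p" "cnj q = q"
    using e by (simp_all add: p_def q_def e_def flip: of_real_mult exp_add)
  have qq: "q * (q * x) = of_real (1 - e) * x" for x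
    by (simp add: mult.assoc[symmetric] pq)
  have "flow (\<lambda>_. 0) G (\<lambda>t. exp (- G t) - 1) t =
      (\<lambda>X. mat2 p 0 0 1 ** X ** adj (mat2 p 0 0 1) + mat2 0 0 q 0 ** X ** adj (mat2 0 0 q 0))"
    by (simp add: fun_eq_iff qmat_eq_iff flow_def Let_def matrix_matrix_mult_nth_2 pq
          flip: e_def p_def) (simp add: qq pq field_simps)
  then show ?thesis
    by (simp add: completely_positive_add completely_positive_conj)
qed

lemma commutative_family_gen1: "commutative_family (gen1 g)"
  by (auto simp: commutative_family_def fun_eq_iff qmat_eq_iff algebra_simps)

lemma commutative_family_gen2: "commutative_family (gen2 g)"
  by (auto simp: commutative_family_def fun_eq_iff qmat_eq_iff algebra_simps)

lemma Zint_scaled: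
  assumes L: "\<And>\<tau>. L \<tau> \<rho> = smat (complex_of_real (g \<tau>)) M"
    and G_deriv: "\<And>\<tau>. 0 \<le> \<tau> \<Longrightarrow> (G has_real_derivative g \<tau>) (at \<tau> within {0..})"
    and t: "0 \<le> t"
  shows "Zint L t \<rho> = smat (complex_of_real (G t - G 0)) M"
proof -
  have "(g has_integral G t - G 0) {0..t}"
    by (rule fundamental_theorem_of_calculus[OF t])
       (auto simp: has_real_derivative_iff_has_vector_derivative[symmetric]
         intro!: DERIV_subset[OF G_deriv])
  then have "((\<lambda>\<tau>. g \<tau> *\<^sub>R M) has_integral (G t - G 0) *\<^sub>R M) {0..t}"
    by (rule has_integral_scaleR_left)
  moreover have "smat (complex_of_real r) M = r *\<^sub>R M" for r
    by (simp add: qmat_eq_iff; simp add: scaleR_conv_of_real)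
  ultimately show ?thesis
    by (simp add: Zint_def L integral_unique del: of_real_diff)
qed

definition inv_sqrt2 :: complex where
  "inv_sqrt2 = complex_of_real (inverse (sqrt 2))"

lemma inv_sqrt2_simps: "inv_sqrt2 * inv_sqrt2 = 1/2" "inv_sqrt2 * (inv_sqrt2 * x) = x / 2"
  "cnj inv_sqrt2 = inv_sqrt2"
proof -
  have "inv_sqrt2 * inv_sqrt2 = complex_of_real (inverse (sqrt 2) * inverse (sqrt 2))"
    by (simp add: inv_sqrt2_def)
  also have "inverse (sqrt 2) * inverse (sqrt 2) = (1/2::real)"
    by (simp flip: inverse_mult_distrib)
  finally show half: "inv_sqrt2 * inv_sqrt2 = 1/2"
    by simp
  show "inv_sqrt2 * (inv_sqrt2 * x) = x / 2"
    by (simp add: mult.assoc[symmetric] half)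
  show "cnj inv_sqrt2 = inv_sqrt2"
    by (simp add: inv_sqrt2_def)
qed

lemma psd_single_entry:
  assumes "0 \<le> c"
  shows "psd ((\<chi> i j. if i = 1 \<and> j = 1 then complex_of_real c else 0) :: complex^3^3)"
proof -
  have "0 \<le> x * (c * x)" for x :: real
    using assms by (metis mult.left_commute mult_nonneg_nonneg zero_le_square)
  then show ?thesis
    by (simp add: psd_def hform_def matrix_vector_mult_def sum_3 nonneg_real_def)
qed

text \<open>In the normalised Pauli basis \<open>\<sigma>\<^sub>x/\<surd>2, \<sigma>\<^sub>y/\<surd>2, \<sigma>\<^sub>z/\<surd>2\<close>, \<open>gen1\<close> has the single
  Kossakowski coefficient \<open>2c\<close>; \<open>gen2\<close> uses the basis \<open>\<sigma>\<^sub>-, \<sigma>\<^sub>+, \<sigma>\<^sub>z/\<surd>2\<close>.\<close>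

lemma GKSL_form_gen1:
  assumes "0 \<le> c"
  shows "GKSL_form (gen1 (\<lambda>_. c) 0)"
  unfolding GKSL_form_def
proof (intro exI conjI allI)
  let ?F = "\<lambda>i::3. if i = 1 then mat2 0 inv_sqrt2 inv_sqrt2 0
    else if i = 2 then mat2 0 (-\<i> * inv_sqrt2) (\<i> * inv_sqrt2) 0 else mat2 inv_sqrt2 0 0 (-inv_sqrt2)"
  let ?D = "(\<chi> i j. if i = 1 \<and> j = 1 then complex_of_real (2 * c) else 0) :: complex^3^3"
  show "adj (0::qmat) = 0"
    by (simp add: qmat_eq_iff)
  show "orthonormal_traceless_basis ?F"
    by (simp add: orthonormal_traceless_basis_def forall_3 trace_def sum_2
        matrix_matrix_mult_nth_2 inv_sqrt2_simps)
  show "psd ?D"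
    using psd_single_entry[of "2 * c"] assms by simp
  show "gen1 (\<lambda>_. c) 0 \<rho> = smat (- \<i>) (0 ** \<rho> - \<rho> ** 0) +
      (\<Sum>i\<in>UNIV. \<Sum>j\<in>UNIV. smat (?D$i$j) (?F i ** \<rho> ** adj (?F j) -
        smat (1/2) (adj (?F j) ** ?F i ** \<rho> + \<rho> ** adj (?F j) ** ?F i)))" for \<rho>
    by (simp add: sum_3 qmat_eq_iff matrix_matrix_mult_nth_2 inv_sqrt2_simps algebra_simps)
qed

lemma GKSL_form_gen2:
  assumes "0 \<le> c"
  shows "GKSL_form (gen2 (\<lambda>_. c) 0)"
  unfolding GKSL_form_def
proof (intro exI conjI allI)
  let ?F = "\<lambda>i::3. if i = 1 then mat2 0 0 1 0 else if i = 2 then mat2 0 1 0 0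
    else mat2 inv_sqrt2 0 0 (-inv_sqrt2)"
  let ?D = "(\<chi> i j. if i = 1 \<and> j = 1 then complex_of_real c else 0) :: complex^3^3"
  show "adj (0::qmat) = 0"
    by (simp add: qmat_eq_iff)
  show "orthonormal_traceless_basis ?F"
    by (simp add: orthonormal_traceless_basis_def forall_3 trace_def sum_2
        matrix_matrix_mult_nth_2 inv_sqrt2_simps)
  show "psd ?D"
    using psd_single_entry[of c] assms by simp
  show "gen2 (\<lambda>_. c) 0 \<rho> = smat (- \<i>) (0 ** \<rho> - \<rho> ** 0) +
      (\<Sum>i\<in>UNIV. \<Sum>j\<in>UNIV. smat (?D$i$j) (?F i ** \<rho> ** adj (?F j) -
        smat (1/2) (adj (?F j) ** ?F i ** \<rho> + \<rho> ** adj (?F j) ** ?F i)))" for \<rho>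
    by (simp add: sum_3 qmat_eq_iff matrix_matrix_mult_nth_2 inv_sqrt2_simps algebra_simps)
qed

lemma generates_SSC_CPTP_gen1:
  assumes G_deriv: "\<And>t. 0 \<le> t \<Longrightarrow> (G has_real_derivative g t) (at t within {0..})"
    and G_0: "G 0 = 0" and G_nonneg: "\<And>t. 0 \<le> t \<Longrightarrow> 0 \<le> G t"
  shows "generates_SSC_CPTP (gen1 g)"
proof -
  interpret primitive_rates g "\<lambda>_. 0" G "\<lambda>_. 0" "\<lambda>_. 0"
    by unfold_locales (simp_all add: G_deriv G_0)
  have "GKSL_form (Zint (gen1 g) t)" if "0 \<le> t" for t
  proof -
    have "Zint (gen1 g) t = gen1 (\<lambda>_. G t) 0"
      using Zint_scaled[where L="gen1 g" and g=g, OF gen1_def G_deriv that] by (simp add: fun_eq_iff gen1_def G_0)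
    then show ?thesis
      using GKSL_form_gen1[OF G_nonneg[OF that]] by simp
  qed
  moreover have "CPTP (\<Lambda> t)" if "solves (gen1 g) \<Lambda>" and "0 \<le> t" for \<Lambda> t
    using solves_imp_eq_flow[OF that[unfolded gen1_eq_gen12]] flow_linear flow_trace_preserving
      completely_positive_flow_bit_flip[of G, OF G_nonneg[OF that(2)]]
    by (simp add: CPTP_def)
  ultimately show ?thesis
    using flow_solves commutative_family_gen1
    by (auto simp: generates_SSC_CPTP_def SSC_def gen1_eq_gen12)
qed

lemma generates_SSC_CPTP_gen2:
  assumes G_deriv: "\<And>t. 0 \<le> t \<Longrightarrow> (G has_real_derivative g t) (at t within {0..})"
    and G_0: "G 0 = 0" and G_nonneg: "\<And>t. 0 \<le> t \<Longrightarrow> 0 \<le> G t"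
  shows "generates_SSC_CPTP (gen2 g)"
proof -
  interpret primitive_rates "\<lambda>_. 0" g "\<lambda>_. 0" G "\<lambda>t. exp (- G t) - 1"
    by unfold_locales (auto simp: G_0 algebra_simps intro!: derivative_eq_intros G_deriv)
  have "GKSL_form (Zint (gen2 g) t)" if "0 \<le> t" for t
  proof -
    have "Zint (gen2 g) t = gen2 (\<lambda>_. G t) 0"
      using Zint_scaled[where L="gen2 g" and g=g, OF gen2_def G_deriv that] by (simp add: fun_eq_iff gen2_def G_0)
    then show ?thesis
      using GKSL_form_gen2[OF G_nonneg[OF that]] by simp
  qed
  moreover have "CPTP (\<Lambda> t)" if "solves (gen2 g) \<Lambda>" and "0 \<le> t" for \<Lambda> t
    using solves_imp_eq_flow[OF that[unfolded gen2_eq_gen12]] flow_linear flow_trace_preserving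
      completely_positive_flow_amplitude_damping[of G, OF G_nonneg[OF that(2)]]
    by (simp add: CPTP_def)
  ultimately show ?thesis
    using flow_solves commutative_family_gen2
    by (auto simp: generates_SSC_CPTP_def SSC_def gen2_eq_gen12)
qed

lemma (in primitive_rates) sum_dynamics_not_completely_positive:
  assumes "\<not> completely_positive (flow G1 G2 \<phi> T)" and "0 \<le> T"
  shows "(\<exists>\<Lambda>. solves (\<lambda>t \<rho>. gen1 g1 t \<rho> + gen2 g2 t \<rho>) \<Lambda>) \<and>
    (\<forall>\<Lambda>. solves (\<lambda>t \<rho>. gen1 g1 t \<rho> + gen2 g2 t \<rho>) \<Lambda> \<longrightarrow> \<not> completely_positive (\<Lambda> T))"
proof -
  have sum_eq: "(\<lambda>t \<rho>. gen1 g1 t \<rho> + gen2 g2 t \<rho>) = gen12 g1 g2"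
    by (simp add: fun_eq_iff gen12_def)
  have "\<not> completely_positive (\<Lambda> T)" if "solves (gen12 g1 g2) \<Lambda>" for \<Lambda>
    using solves_imp_eq_flow[OF that assms(2)] assms(1) by simp
  with flow_solves show ?thesis
    unfolding sum_eq by blast
qed

lemma flow_not_completely_positive_of_population:
  assumes "\<phi> t < exp (- 2 * G1 t - G2 t) - 1"
  shows "\<not> completely_positive (flow G1 G2 \<phi> t)"
proof
  assume "completely_positive (flow G1 G2 \<phi> t)"
  moreover have "psd (mat2 0 0 0 1)"
    by (simp add: psd_def hform_2 matrix_vector_mult_nth_2 nonneg_real_def)
  ultimately have "nonneg_real (flow G1 G2 \<phi> t (mat2 0 0 0 1) $ 1 $ 1)"
    by (rule completely_positive_diagonal_nonneg)
  then show False
    using assms by (simp add: flow_def Let_def nonneg_real_def)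
qed

lemma flow_not_completely_positive_of_choi:
  assumes "0 < 1 + exp (- 2 * G1 t - G2 t) + \<phi> t"
    and "(1 + exp (- 2 * G1 t - G2 t))\<^sup>2 - (\<phi> t)\<^sup>2 < (exp (- G2 t / 2) + exp (- 2 * G1 t - G2 t / 2))\<^sup>2"
  shows "\<not> completely_positive (flow G1 G2 \<phi> t)"
proof
  assume cp: "completely_positive (flow G1 G2 \<phi> t)"
  define z u w where "z = exp (- 2 * G1 t - G2 t)" and "u = exp (- G2 t / 2)"
    and "w = exp (- 2 * G1 t - G2 t / 2)"
  have "Re (flow G1 G2 \<phi> t (mat2 1 0 0 0) $ 1 $ 1) = (1 + z + \<phi> t) / 2"
    and "Re (flow G1 G2 \<phi> t (mat2 0 0 0 1) $ 2 $ 2) = (1 + z - \<phi> t) / 2"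
    and "Re (flow G1 G2 \<phi> t (mat2 0 1 0 0) $ 1 $ 2) = (u + w) / 2"
    and "Re (flow G1 G2 \<phi> t (mat2 0 0 1 0) $ 2 $ 1) = (u + w) / 2"
    by (simp_all add: flow_def Let_def z_def u_def w_def)
  with completely_positive_choi_minor[OF cp] assms(1)
  have "((u + w) / 2)\<^sup>2 \<le> (1 + z + \<phi> t) / 2 * ((1 + z - \<phi> t) / 2)"
    by (simp add: z_def)
  also have "\<dots> = ((1 + z)\<^sup>2 - (\<phi> t)\<^sup>2) / 4"
    by (simp add: power2_eq_square algebra_simps)
  finally have "((u + w) / 2)\<^sup>2 \<le> ((1 + z)\<^sup>2 - (\<phi> t)\<^sup>2) / 4" .
  moreover have "(1 + z)\<^sup>2 - (\<phi> t)\<^sup>2 < (u + w)\<^sup>2"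
    using assms(2) by (simp add: z_def u_def w_def)
  ultimately show False
    by (simp add: power_divide)
qed

lemma ode_solution_below_at_pi:
  assumes \<phi>_0: "\<phi> 0 = 0"
    and \<phi>_deriv: "\<And>t. 0 \<le> t \<Longrightarrow>
      (\<phi> has_real_derivative - (2 * sin (2 * t) + 1) * \<phi> t - 1) (at t within {0..})"
  shows "\<phi> pi < exp (- pi) - 1"
proof -
  define E :: "real \<Rightarrow> real" where "E t = 2 * (sin t)\<^sup>2 + t" for t
  have E_deriv: "(E has_real_derivative 2 * sin (2 * t) + 1) (at t)" for t
    unfolding E_def by (auto intro!: derivative_eq_intros simp: sin_double)
  let ?D = "\<lambda>t. exp (E t) * \<phi> t + exp t"
  have "?D pi < ?D 0"
  proof (rule strict_decrease_of_negative_derivative[OF pi_gt_zero])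
    show "(?D has_real_derivative - 1 * exp (E t) + exp t) (at t within {0..})" if "0 \<le> t" for t
      by (intro derivative_intros has_field_derivative_at_within[OF DERIV_exp]
          integrating_factor_derivative[where k="\<lambda>t. 2 * sin (2 * t) + 1" and h="\<lambda>_. 1",
          OF E_deriv \<phi>_deriv[OF that]])
    show "- 1 * exp (E t) + exp t < 0" if "0 < t" "t < pi" for t
      using sin_gt_zero[OF that] by (simp add: E_def)
  qed
  then show ?thesis
    by (simp add: E_def \<phi>_0 exp_minus field_simps)
qed

lemma ode_solution_pos_at_2pi:
  assumes \<phi>_0: "\<phi> 0 = 0"
    and \<phi>_deriv: "\<And>t. 0 \<le> t \<Longrightarrow>
      (\<phi> has_real_derivative - (1 + sin t) * \<phi> t - sin t) (at t within {0..})"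
  shows "0 < \<phi> (2 * pi)"
proof -
  define E :: "real \<Rightarrow> real" where "E t = t + 1 - cos t" for t
  have E_deriv: "(E has_real_derivative 1 + sin t) (at t)" for t
    unfolding E_def by (auto intro!: derivative_eq_intros)
  let ?D = "\<lambda>t. exp t - exp (E t) * \<phi> t - exp (E t)"
  have "?D (2 * pi) < ?D 0"
  proof (rule strict_decrease_of_negative_derivative)
    show "(?D has_real_derivative exp t - - sin t * exp (E t) - exp (E t) * (1 + sin t))
      (at t within {0..})" if "0 \<le> t" for t
      by (intro derivative_intros has_field_derivative_at_within[OF DERIV_exp]
          integrating_factor_derivative[where k="\<lambda>t. 1 + sin t" and h=sin,
            OF E_deriv \<phi>_deriv[OF that]]
          has_field_derivative_at_within[OF E_deriv])
    show "exp t - - sin t * exp (E t) - exp (E t) * (1 + sin t) < 0" if "0 < t" "t < 2 * pi" for t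
    proof -
      have "cos t < 1"
        using sin_gt_zero[of "t / 2"] cos_double_sin[of "t / 2"] that by simp
      then show ?thesis
        by (simp add: E_def algebra_simps)
    qed
  qed simp
  then show ?thesis
    by (simp add: E_def \<phi>_0 zero_less_mult_iff)
qed

lemma oscillating_bit_flip_with_damping:
  "let L1 = gen1 (\<lambda>t. sin (2*t)); L2 = gen2 (\<lambda>t. 1) in
     generates_SSC_CPTP L1 \<and> generates_SSC_CPTP L2 \<and>
     (\<exists>\<Lambda>. solves (\<lambda>t \<rho>. L1 t \<rho> + L2 t \<rho>) \<Lambda>) \<and>
     (\<forall>\<Lambda>. solves (\<lambda>t \<rho>. L1 t \<rho> + L2 t \<rho>) \<Lambda> \<longrightarrow> \<not> completely_positive (\<Lambda> pi))"
proof -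
  have G1_deriv: "((\<lambda>t. (sin t)\<^sup>2) has_real_derivative sin (2 * t)) (at t within {0..})" for t
    by (auto intro!: derivative_eq_intros simp: sin_double)
  have G2_deriv: "((\<lambda>t. t) has_real_derivative 1) (at t within {0..})" for t :: real
    by (rule DERIV_ident)
  have E_deriv: "((\<lambda>t. 2 * (sin t)\<^sup>2 + t) has_real_derivative 2 * sin (2 * t) + 1) (at t)" for t
    by (auto intro!: derivative_eq_intros simp: sin_double)
  obtain \<phi> where \<phi>_start: "\<phi> 0 = 0" and \<phi>_ode: "\<And>t. 0 \<le> t \<Longrightarrow>
      (\<phi> has_real_derivative - (2 * sin (2 * t) + 1) * \<phi> t - 1) (at t within {0..})"
    using first_order_linear_ode_solution[where h="\<lambda>_. 1", OF E_deriv continuous_on_const] by blast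
  interpret primitive_rates "\<lambda>t. sin (2 * t)" "\<lambda>_. 1" "\<lambda>t. (sin t)\<^sup>2" "\<lambda>t. t" \<phi>
    by unfold_locales (use G1_deriv G2_deriv \<phi>_ode in \<open>simp_all add: \<phi>_start\<close>)
  have "\<not> completely_positive (flow (\<lambda>t. (sin t)\<^sup>2) (\<lambda>t. t) \<phi> pi)"
    using ode_solution_below_at_pi[OF \<phi>_start \<phi>_ode]
    by (intro flow_not_completely_positive_of_population) simp
  then show ?thesis
    unfolding Let_def
    using generates_SSC_CPTP_gen1[OF G1_deriv] generates_SSC_CPTP_gen2[OF G2_deriv]
      sum_dynamics_not_completely_positive
    by simp
qed

lemma bit_flip_with_oscillating_damping:
  "let L1 = gen1 (\<lambda>t. 1/2); L2 = gen2 (\<lambda>t. sin t) in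
     generates_SSC_CPTP L1 \<and> generates_SSC_CPTP L2 \<and>
     (\<exists>\<Lambda>. solves (\<lambda>t \<rho>. L1 t \<rho> + L2 t \<rho>) \<Lambda>) \<and>
     (\<forall>\<Lambda>. solves (\<lambda>t \<rho>. L1 t \<rho> + L2 t \<rho>) \<Lambda> \<longrightarrow> \<not> completely_positive (\<Lambda> (2*pi)))"
proof -
  have G1_deriv: "((\<lambda>t. t / 2) has_real_derivative 1 / 2) (at t within {0..})" for t :: real
    by (auto intro!: derivative_eq_intros)
  have G2_deriv: "((\<lambda>t. 1 - cos t) has_real_derivative sin t) (at t within {0..})" for t
    by (auto intro!: derivative_eq_intros)
  have E_deriv: "((\<lambda>t. t + 1 - cos t) has_real_derivative 1 + sin t) (at t)" for t
    by (auto intro!: derivative_eq_intros)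
  obtain \<phi> where \<phi>_start: "\<phi> 0 = 0" and \<phi>_ode: "\<And>t. 0 \<le> t \<Longrightarrow>
      (\<phi> has_real_derivative - (1 + sin t) * \<phi> t - sin t) (at t within {0..})"
    using first_order_linear_ode_solution[OF E_deriv continuous_on_sin[OF continuous_on_id]] by blast
  interpret primitive_rates "\<lambda>_. 1/2" sin "\<lambda>t. t / 2" "\<lambda>t. 1 - cos t" \<phi>
    by unfold_locales (use G1_deriv G2_deriv \<phi>_ode in \<open>simp_all add: \<phi>_start\<close>)
  have "\<not> completely_positive (flow (\<lambda>t. t / 2) (\<lambda>t. 1 - cos t) \<phi> (2 * pi))"
    using ode_solution_pos_at_2pi[OF \<phi>_start \<phi>_ode]
    by (intro flow_not_completely_positive_of_choi) (simp_all add: add_pos_pos power2_eq_square)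
  then show ?thesis
    unfolding Let_def
    using generates_SSC_CPTP_gen1[OF G1_deriv] generates_SSC_CPTP_gen2[OF G2_deriv]
      sum_dynamics_not_completely_positive
    by simp
qed

theorem mainTheorem3:
  shows "(let L1 = gen1 (\<lambda>t. sin (2*t)); L2 = gen2 (\<lambda>t. 1) in
            generates_SSC_CPTP L1 \<and> generates_SSC_CPTP L2 \<and>
            (\<exists>\<Lambda>. solves (\<lambda>t \<rho>. L1 t \<rho> + L2 t \<rho>) \<Lambda>) \<and>
            (\<forall>\<Lambda>. solves (\<lambda>t \<rho>. L1 t \<rho> + L2 t \<rho>) \<Lambda> \<longrightarrow>
                 \<not> completely_positive (\<Lambda> pi)))
       \<and> (let L1 = gen1 (\<lambda>t. 1/2); L2 = gen2 (\<lambda>t. sin t) in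
            generates_SSC_CPTP L1 \<and> generates_SSC_CPTP L2 \<and>
            (\<exists>\<Lambda>. solves (\<lambda>t \<rho>. L1 t \<rho> + L2 t \<rho>) \<Lambda>) \<and>
            (\<forall>\<Lambda>. solves (\<lambda>t \<rho>. L1 t \<rho> + L2 t \<rho>) \<Lambda> \<longrightarrow>
                 \<not> completely_positive (\<Lambda> (2*pi))))"
  using oscillating_bit_flip_with_damping bit_flip_with_oscillating_damping by (rule conjI)

end
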